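(* Let $T$ be an integral domain, let $K$ be a subfield of $T$ and $M$ a nonzero maximal ideal of $T$ such that $T=K+M$. Let $k$ be a subfield of $K$ and set $R=k+M$. Then: (1) If $M$ contains an irreducible element of $T$, then $R$ is a U-FFD if and only if $T$ is a U-FFD and the quotient group $K^\times/k^\times$ is finite. (2) If $M$ contains no irreducible element of $T$, then $R$ is a U-FFD if and only if $T$ is a U-FFD.
   Context: An integral domain is a U-FFD (has the U-FF property) if every nonzero element that is a unit or a finite product of irreducible elements has only finitely many factorizations into irreducibles, counted up to order and associates. $K^\times,k^\times$ denote the multiplicative groups of the fields. *)

theory Defs
  imports Main "HOL-Library.Multiset"
begin

text \<open>All rings live inside the integral domain T, rendered as the full type 'a::idom.
Subrings (such as R = k + M) are given as carrier sets S, and the divisibility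
notions (units, irreducibles, associates, factorizations) are taken relative to S.\<close>

definition is_subring :: "'a::idom set \<Rightarrow> bool" where
  "is_subring S \<longleftrightarrow> 0 \<in> S \<and> 1 \<in> S \<and>
     (\<forall>x\<in>S. \<forall>y\<in>S. x + y \<in> S \<and> x - y \<in> S \<and> x * y \<in> S)"

definition is_subfield :: "'a::idom set \<Rightarrow> bool" where
  "is_subfield F \<longleftrightarrow> is_subring F \<and> (\<forall>x\<in>F. x \<noteq> 0 \<longrightarrow> (\<exists>y\<in>F. x * y = 1))"

definition is_ideal :: "'a::idom set \<Rightarrow> bool" where
  "is_ideal I \<longleftrightarrow> 0 \<in> I \<and> (\<forall>x\<in>I. \<forall>y\<in>I. x + y \<in> I) \<and> (\<forall>r. \<forall>x\<in>I. r * x \<in> I)"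

definition is_maximal_ideal :: "'a::idom set \<Rightarrow> bool" where
  "is_maximal_ideal M \<longleftrightarrow> is_ideal M \<and> M \<noteq> UNIV \<and>
     (\<forall>I. is_ideal I \<and> M \<subseteq> I \<longrightarrow> I = M \<or> I = UNIV)"

definition unit_in :: "'a::idom set \<Rightarrow> 'a \<Rightarrow> bool" where
  "unit_in S u \<longleftrightarrow> u \<in> S \<and> (\<exists>v\<in>S. u * v = 1)"

definition irred_in :: "'a::idom set \<Rightarrow> 'a \<Rightarrow> bool" where
  "irred_in S p \<longleftrightarrow> p \<in> S \<and> p \<noteq> 0 \<and> \<not> unit_in S p \<and>
     (\<forall>a\<in>S. \<forall>b\<in>S. p = a * b \<longrightarrow> unit_in S a \<or> unit_in S b)"

definition assoc_in :: "'a::idom set \<Rightarrow> 'a \<Rightarrow> 'a \<Rightarrow> bool" where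
  "assoc_in S a b \<longleftrightarrow> a \<in> S \<and> b \<in> S \<and> (\<exists>u. unit_in S u \<and> a = u * b)"

text \<open>A factorization of x in S: a finite multiset of irreducibles of S whose product
is x up to a unit of S (for a unit x this is the empty factorization).\<close>
definition factorizations_in :: "'a::idom set \<Rightarrow> 'a \<Rightarrow> 'a multiset set" where
  "factorizations_in S x = {m. (\<forall>p\<in>#m. irred_in S p) \<and> assoc_in S x (prod_mset m)}"

definition fact_equiv :: "'a::idom set \<Rightarrow> ('a multiset \<times> 'a multiset) set" where
  "fact_equiv S = {(m, m'). rel_mset (assoc_in S) m m'}"

definition is_atomic_elem :: "'a::idom set \<Rightarrow> 'a \<Rightarrow> bool" where
  "is_atomic_elem S x \<longleftrightarrow> unit_in S x \<or>
     (\<exists>m. m \<noteq> {#} \<and> (\<forall>p\<in>#m. irred_in S p) \<and> x = prod_mset m)"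

definition U_FFD :: "'a::idom set \<Rightarrow> bool" where
  "U_FFD S \<longleftrightarrow> (\<forall>x\<in>S. x \<noteq> 0 \<and> is_atomic_elem S x \<longrightarrow>
      finite (factorizations_in S x // fact_equiv S))"

text \<open>Finiteness of the quotient group K^x / k^x (cosets of k^x in K^x).\<close>
definition finite_unit_quotient :: "'a::idom set \<Rightarrow> 'a set \<Rightarrow> bool" where
  "finite_unit_quotient K k \<longleftrightarrow> finite {(\<lambda>y. x * y) ` (k - {0}) | x. x \<in> K - {0}}"

end

theory Submission
  imports Defs
begin

text \<open>Let \<pi> : T \<rightarrow> K be the residue map along T = K \<oplus> M, so that R = \<pi>^-1(k).
  The units of R are the units of T lying in R, and the irreducibles of R are the irreducibles
  of T lying in R: a factorization x y \<in> R can always be rescaled by mutually inverse elements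
  of K so that both factors lie in R. Since every element of T becomes an element of R after
  multiplication by some c \<in> K - {0}, factorizations in T transfer to factorizations in R up
  to associates in T, so R being a U-FFD forces T to be one. Conversely, the elements of R that
  are associate in T to a fixed irreducible p fall into one associate class of R if p \<notin> M,
  and into classes indexed by cosets of k^x in K^x if p \<in> M; this gives the converse
  implications. Finally, when p \<in> M is irreducible, the factorizations (c p)(c^-1 p) of p^2
  for c \<in> K - {0} realise every coset, so R can only be a U-FFD if K^x/k^x is finite.\<close>

definition mult_closed :: "'a::idom set \<Rightarrow> bool" where
  "mult_closed S \<longleftrightarrow> (\<forall>x\<in>S. \<forall>y\<in>S. x * y \<in> S)"

lemma mult_closed_UNIV: "mult_closed UNIV"
  unfolding mult_closed_def by simp

lemma unit_in_UNIV_iff: "unit_in UNIV u \<longleftrightarrow> (\<exists>v. u * v = 1)"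
  unfolding unit_in_def by simp

lemma unit_in_one: "1 \<in> S \<Longrightarrow> unit_in S 1"
  unfolding unit_in_def by auto

lemma unit_in_inverse:
  assumes "unit_in S u"
  obtains v where "unit_in S v" "u * v = 1"
  using assms unfolding unit_in_def by (metis mult.commute)

lemma unit_in_mult:
  assumes "mult_closed S" "unit_in S a" "unit_in S b"
  shows "unit_in S (a * b)"
proof -
  obtain a' b' where "a' \<in> S" "b' \<in> S" "a * a' = 1" "b * b' = 1"
    using assms(2,3) unfolding unit_in_def by blast
  then have "(a * b) * (a' * b') = 1"
    by (metis mult.assoc mult.left_commute mult_1_right)
  then show ?thesis
    using assms \<open>a' \<in> S\<close> \<open>b' \<in> S\<close> unfolding unit_in_def mult_closed_def by blast
qed

lemma unit_in_mult_cancel_left: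
  assumes "mult_closed S" "unit_in S u" "unit_in S (u * a)" "a \<in> S"
  shows "unit_in S a"
proof -
  obtain v where v: "unit_in S v" "u * v = 1" using assms(2) by (rule unit_in_inverse)
  have "a = v * (u * a)" using v(2) by (simp add: algebra_simps)
  then show ?thesis using unit_in_mult[OF assms(1) v(1) assms(3)] by metis
qed

lemma irred_in_unit_mult:
  assumes S: "mult_closed S" and u: "unit_in S u" and q: "irred_in S q"
  shows "irred_in S (u * q)"
proof -
  obtain v where v: "unit_in S v" "u * v = 1" using u by (rule unit_in_inverse)
  have qS: "q \<in> S" "q \<noteq> 0" "\<not> unit_in S q" using q unfolding irred_in_def by auto
  have "u * q \<in> S" using S u qS(1) unfolding mult_closed_def unit_in_def by blast
  moreover have "u * q \<noteq> 0" using qS(2) v(2) by auto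
  moreover have "\<not> unit_in S (u * q)"
    using unit_in_mult_cancel_left[OF S u _ qS(1)] qS(3) by blast
  moreover have "unit_in S a \<or> unit_in S b" if "a \<in> S" "b \<in> S" "u * q = a * b" for a b
  proof -
    have "q = (v * a) * b" using that(3) v(2) by (metis mult.assoc mult.left_commute mult_1_right)
    moreover have "v * a \<in> S" using S v(1) that(1) unfolding mult_closed_def unit_in_def by blast
    ultimately have "unit_in S (v * a) \<or> unit_in S b" using q that(2) unfolding irred_in_def by blast
    moreover have "a = u * (v * a)" using v(2) by (simp add: mult.assoc[symmetric])
    ultimately show ?thesis using unit_in_mult[OF S u] by metis
  qed
  ultimately show ?thesis unfolding irred_in_def by blast
qed

lemma assoc_in_refl: "1 \<in> S \<Longrightarrow> p \<in> S \<Longrightarrow> assoc_in S p p"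
  unfolding assoc_in_def using unit_in_one by fastforce

lemma assoc_in_sym:
  assumes "assoc_in S a b"
  shows "assoc_in S b a"
proof -
  obtain u v where "a \<in> S" "b \<in> S" "unit_in S v" "u * v = 1" "a = u * b"
    using assms unfolding assoc_in_def by (metis unit_in_inverse)
  then have "b = v * a" by (metis mult.assoc mult.commute mult_1)
  then show ?thesis unfolding assoc_in_def using \<open>a \<in> S\<close> \<open>b \<in> S\<close> \<open>unit_in S v\<close> by blast
qed

lemma assoc_in_trans:
  assumes "mult_closed S" "assoc_in S a b" "assoc_in S b c"
  shows "assoc_in S a c"
proof -
  obtain u u' where "a \<in> S" "c \<in> S" "unit_in S u" "a = u * b" "unit_in S u'" "b = u' * c"
    using assms(2,3) unfolding assoc_in_def by blast
  then show ?thesis unfolding assoc_in_def using unit_in_mult[OF assms(1)]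
    by (metis mult.assoc)
qed

lemma fact_equiv_sym: "sym (fact_equiv S)"
proof (rule symI)
  fix m n assume "(m, n) \<in> fact_equiv S"
  then have "rel_mset (conversep (assoc_in S)) n m"
    unfolding fact_equiv_def by (simp add: multiset.rel_flip)
  then have "rel_mset (assoc_in S) n m"
    by (rule multiset.rel_mono_strong) (simp add: assoc_in_sym)
  then show "(n, m) \<in> fact_equiv S" unfolding fact_equiv_def by simp
qed

lemma fact_equiv_trans:
  assumes "mult_closed S"
  shows "trans (fact_equiv S)"
proof (rule transI)
  fix l m n assume "(l, m) \<in> fact_equiv S" "(m, n) \<in> fact_equiv S"
  then have "rel_mset (assoc_in S OO assoc_in S) l n"
    unfolding fact_equiv_def by (auto simp: multiset.rel_compp)
  then have "rel_mset (assoc_in S) l n"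
    by (rule multiset.rel_mono_strong) (use assoc_in_trans[OF assms] in blast)
  then show "(l, n) \<in> fact_equiv S" unfolding fact_equiv_def by simp
qed

lemma fact_equiv_refl:
  assumes "1 \<in> S" "m \<in> factorizations_in S x"
  shows "(m, m) \<in> fact_equiv S"
  using assms unfolding fact_equiv_def factorizations_in_def irred_in_def
  by (auto intro!: multiset.rel_refl_strong assoc_in_refl)

lemma rel_mset_image_mset:
  "(\<And>x. x \<in># m \<Longrightarrow> P x (f x)) \<Longrightarrow> rel_mset P m (image_mset f m)"
  by (auto simp: multiset.rel_map intro: multiset.rel_refl_strong)

lemma rel_mset_related_member:
  "rel_mset P m n \<Longrightarrow> x \<in># m \<Longrightarrow> \<exists>y\<in>#n. P x y"
  by (induction rule: rel_mset_induct) auto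

lemma prod_mset_assoc_in:
  assumes "mult_closed S" "1 \<in> S" "rel_mset (assoc_in S) m n"
  shows "\<exists>u. unit_in S u \<and> prod_mset m = u * prod_mset n"
  using assms(3)
proof (induction "assoc_in S" m n rule: rel_mset_induct)
  case empty
  show ?case using unit_in_one[OF assms(2)] by auto
next
  case (add a b m n)
  then obtain u w where u: "unit_in S u" "prod_mset m = u * prod_mset n"
    and w: "unit_in S w" "a = w * b"
    unfolding assoc_in_def by blast
  have "prod_mset (add_mset a m) = (w * u) * prod_mset (add_mset b n)"
    using u(2) w(2) by (simp add: algebra_simps)
  then show ?case using unit_in_mult[OF assms(1) w(1) u(1)] by blast
qed

text \<open>A nonempty factorization absorbs its unit into one of its irreducible factors.\<close>
lemma is_atomic_elem_if_factorization:
  assumes S: "mult_closed S" and m: "m \<in> factorizations_in S x" "m \<noteq> {#}"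
  shows "is_atomic_elem S x"
proof -
  obtain q n where mq: "m = add_mset q n" using m(2) multi_nonempty_split by blast
  obtain v where v: "unit_in S v" "x = v * prod_mset m"
    using m(1) unfolding factorizations_in_def assoc_in_def by blast
  have "\<forall>p\<in>#m. irred_in S p" using m(1) unfolding factorizations_in_def by blast
  then have "\<forall>p\<in>#add_mset (v * q) n. irred_in S p"
    using irred_in_unit_mult[OF S v(1), of q] unfolding mq by simp
  moreover have "x = prod_mset (add_mset (v * q) n)" using v(2) mq by (simp add: mult.assoc)
  ultimately show ?thesis
    unfolding is_atomic_elem_def by (intro disjI2 exI[of _ "add_mset (v * q) n"]) simp
qed

lemma finite_quotient_representatives:
  assumes "finite (A // r)" "\<And>a. a \<in> A \<Longrightarrow> (a, a) \<in> r"
  obtains B where "B \<subseteq> A" "finite B" "\<And>a. a \<in> A \<Longrightarrow> \<exists>b\<in>B. (a, b) \<in> r"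
proof -
  define rep where "rep C = (SOME b. b \<in> A \<and> C = r `` {b})" for C
  have rep: "rep C \<in> A \<and> C = r `` {rep C}" if "C \<in> A // r" for C
    unfolding rep_def by (rule someI_ex) (use that in \<open>auto simp: quotient_def\<close>)
  have rep_related: "(a, rep (r `` {a})) \<in> r" if a: "a \<in> A" for a
  proof -
    have "r `` {a} \<in> A // r" using a by (rule quotientI)
    then have "rep (r `` {a}) \<in> A" "r `` {a} = r `` {rep (r `` {a})}" using rep by blast+
    then show ?thesis using assms(2) by blast
  qed
  show ?thesis
  proof (rule that)
    show "rep ` (A // r) \<subseteq> A" using rep by blast
    show "finite (rep ` (A // r))" using assms(1) by blast
    show "\<exists>b\<in>rep ` (A // r). (a, b) \<in> r" if "a \<in> A" for a
      using rep_related[OF that] quotientI[OF that, of r] by blast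
  qed
qed

lemma finite_quotient_if_finite_cover:
  assumes "finite C" "sym s" "trans s" "\<And>b. b \<in> B \<Longrightarrow> \<exists>c\<in>C. (b, c) \<in> s"
  shows "finite (B // s)"
proof -
  have "s `` {b} = s `` {c}" if "(b, c) \<in> s" for b c
    using that assms(2,3) by (blast dest: symD transD)
  then have "B // s \<subseteq> (\<lambda>c. s `` {c}) ` C" unfolding quotient_def using assms(4) by blast
  then show ?thesis using assms(1) finite_subset by blast
qed

lemma finite_image_if_determined_by_finite:
  assumes "finite S" "\<And>a. a \<in> A \<Longrightarrow> \<exists>s\<in>S. r a s"
    and "\<And>a a' s. a \<in> A \<Longrightarrow> a' \<in> A \<Longrightarrow> r a s \<Longrightarrow> r a' s \<Longrightarrow> f a = f a'"
  shows "finite (f ` A)"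
proof -
  define pick where "pick s = (SOME a. a \<in> A \<and> r a s)" for s
  have "f a = f (pick s)" if "a \<in> A" "r a s" for a s
    using someI[of "\<lambda>a. a \<in> A \<and> r a s", OF conjI[OF that]] assms(3) that
    unfolding pick_def by blast
  then have "f ` A \<subseteq> (\<lambda>s. f (pick s)) ` S" using assms(2) by blast
  then show ?thesis using assms(1) finite_subset by blast
qed

lemma finite_cover_if_finite_image:
  assumes "finite (f ` A)" "\<And>a b. a \<in> A \<Longrightarrow> b \<in> A \<Longrightarrow> f a = f b \<Longrightarrow> (a, b) \<in> s"
  obtains Q where "finite Q" "\<And>a. a \<in> A \<Longrightarrow> \<exists>q\<in>Q. (a, q) \<in> s"
proof -
  define pick where "pick y = (SOME a. a \<in> A \<and> f a = y)" for y
  have "pick (f a) \<in> A \<and> f (pick (f a)) = f a" if "a \<in> A" for a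
    unfolding pick_def by (rule someI) (use that in blast)
  then have "(a, pick (f a)) \<in> s" if "a \<in> A" for a using assms(2) that by metis
  then show ?thesis using that[of "pick ` f ` A"] assms(1) by blast
qed

locale D_plus_M =
  fixes K M k R :: "'a::idom set"
  assumes K: "is_subfield K"
    and M: "is_ideal M" and M_proper: "M \<noteq> UNIV"
    and T_eq_K_plus_M: "(UNIV :: 'a set) = {a + b | a b. a \<in> K \<and> b \<in> M}"
    and k: "is_subfield k" and k_subset_K: "k \<subseteq> K"
    and R_def: "R = {a + b | a b. a \<in> k \<and> b \<in> M}"
begin

lemma K_mult: "x \<in> K \<Longrightarrow> y \<in> K \<Longrightarrow> x * y \<in> K"
  and K_diff: "x \<in> K \<Longrightarrow> y \<in> K \<Longrightarrow> x - y \<in> K"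
  and K_inverse: "x \<in> K \<Longrightarrow> x \<noteq> 0 \<Longrightarrow> \<exists>y\<in>K. x * y = 1"
  and k_zero: "0 \<in> k" and k_one: "1 \<in> k"
  and k_mult: "x \<in> k \<Longrightarrow> y \<in> k \<Longrightarrow> x * y \<in> k"
  and k_inverse: "x \<in> k \<Longrightarrow> x \<noteq> 0 \<Longrightarrow> \<exists>y\<in>k. x * y = 1"
  using K k unfolding is_subfield_def is_subring_def by auto

lemma K_zero: "0 \<in> K" and K_one: "1 \<in> K"
  using k_zero k_one k_subset_K by auto

lemma M_zero: "0 \<in> M" and M_add: "x \<in> M \<Longrightarrow> y \<in> M \<Longrightarrow> x + y \<in> M"
  and M_mult_left: "x \<in> M \<Longrightarrow> r * x \<in> M"
  using M unfolding is_ideal_def by auto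

lemma M_mult_right: "x \<in> M \<Longrightarrow> x * r \<in> M"
  using M_mult_left[of x r] by (simp add: mult.commute)

lemma M_diff: "x \<in> M \<Longrightarrow> y \<in> M \<Longrightarrow> x - y \<in> M"
  using M_add[of x "(-1) * y"] M_mult_left[of y "-1"] by simp

lemma one_notin_M: "1 \<notin> M"
  using M_mult_right[of 1] M_proper by auto

lemma K_Int_M: "a \<in> K \<Longrightarrow> a \<in> M \<Longrightarrow> a = 0"
  using K_inverse M_mult_right one_notin_M by metis

text \<open>The K-component of x in T = K \<oplus> M, i.e.\ the residue map T \<rightarrow> T/M \<cong> K.\<close>
definition proj_K :: "'a \<Rightarrow> 'a" where
  "proj_K x = (THE a. a \<in> K \<and> x - a \<in> M)"

lemma proj_K: "proj_K x \<in> K" "x - proj_K x \<in> M"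
proof -
  obtain a b where ab: "x = a + b" "a \<in> K" "b \<in> M" using T_eq_K_plus_M by blast
  have "a' = a" if "a' \<in> K" "x - a' \<in> M" for a'
    using K_Int_M[OF K_diff[OF ab(2) that(1)]] M_diff[OF that(2) ab(3)] ab(1)
    by (simp add: algebra_simps)
  moreover have "x - a \<in> M" using ab by simp
  ultimately have "proj_K x = a" unfolding proj_K_def using ab(2) by blast
  then show "proj_K x \<in> K" "x - proj_K x \<in> M" using ab(2) \<open>x - a \<in> M\<close> by auto
qed

lemma proj_K_eqI:
  assumes "a \<in> K" "x - a \<in> M"
  shows "proj_K x = a"
proof -
  have "a - proj_K x = (x - proj_K x) - (x - a)" by simp
  then have "a - proj_K x \<in> M" using M_diff[OF proj_K(2)[of x] assms(2)] by simp
  then show ?thesis using K_Int_M[OF K_diff[OF assms(1) proj_K(1)[of x]]] by simp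
qed


lemma proj_K_K: "a \<in> K \<Longrightarrow> proj_K a = a"
  by (rule proj_K_eqI) (simp_all add: M_zero)

lemma proj_K_one: "proj_K 1 = 1"
  using proj_K_K K_one by blast

lemma proj_K_mult: "proj_K (x * y) = proj_K x * proj_K y"
proof (rule proj_K_eqI)
  show "proj_K x * proj_K y \<in> K" using proj_K(1) K_mult by blast
  have "x * y - proj_K x * proj_K y = (x - proj_K x) * y + proj_K x * (y - proj_K y)"
    by (simp add: algebra_simps)
  then show "x * y - proj_K x * proj_K y \<in> M"
    using M_add[OF M_mult_right M_mult_left] proj_K(2) by simp
qed

lemma proj_K_prod_mset: "proj_K (prod_mset m) = prod_mset (image_mset proj_K m)"
  by (induction m) (simp_all add: proj_K_one proj_K_mult)

lemma proj_K_eq_0_iff: "proj_K x = 0 \<longleftrightarrow> x \<in> M"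
  using proj_K(2)[of x] proj_K_eqI[of 0 x] K_zero by auto

lemma mem_R_iff: "x \<in> R \<longleftrightarrow> proj_K x \<in> k"
proof
  assume "x \<in> R"
  then obtain a b where "x = a + b" "a \<in> k" "b \<in> M" unfolding R_def by blast
  then show "proj_K x \<in> k" using proj_K_eqI[of a x] k_subset_K by auto
next
  assume "proj_K x \<in> k"
  then show "x \<in> R" unfolding R_def using proj_K(2)[of x] by force
qed

lemma M_subset_R: "M \<subseteq> R"
  using mem_R_iff proj_K_eq_0_iff k_zero by (metis subsetI)

lemma one_R: "1 \<in> R"
  using mem_R_iff proj_K_one k_one by simp

lemma mult_closed_R: "mult_closed R"
  unfolding mult_closed_def using mem_R_iff proj_K_mult k_mult by simp

lemma K_Int_R: "a \<in> K \<Longrightarrow> a \<in> R \<Longrightarrow> a \<in> k"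
  using mem_R_iff proj_K_K by simp

lemma proj_K_unit_nonzero: "unit_in UNIV u \<Longrightarrow> proj_K u \<noteq> 0"
  unfolding unit_in_UNIV_iff using proj_K_mult proj_K_one by (metis mult_zero_left zero_neq_one)

lemma unit_in_K: "a \<in> K \<Longrightarrow> a \<noteq> 0 \<Longrightarrow> unit_in UNIV a"
  unfolding unit_in_UNIV_iff using K_inverse by blast

text \<open>A unit of T lying in R has its inverse in R, because the inverse of its residue lies in k.\<close>
lemma unit_in_R_iff: "unit_in R u \<longleftrightarrow> u \<in> R \<and> unit_in UNIV u"
proof
  assume "unit_in R u" then show "u \<in> R \<and> unit_in UNIV u" unfolding unit_in_def by auto
next
  assume u: "u \<in> R \<and> unit_in UNIV u"
  then obtain v where v: "u * v = 1" unfolding unit_in_UNIV_iff by blast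
  have "proj_K u \<in> k" "proj_K u \<noteq> 0" using u mem_R_iff proj_K_unit_nonzero by auto
  then obtain e where e: "e \<in> k" "proj_K u * e = 1" using k_inverse by blast
  have "proj_K u * proj_K v = 1" using v proj_K_mult proj_K_one by metis
  then have "proj_K v = e" using e(2) \<open>proj_K u \<noteq> 0\<close>
    by (metis mult.left_commute mult_1_right)
  then have "v \<in> R" using mem_R_iff e(1) by simp
  then show "unit_in R u" unfolding unit_in_def using u v by auto
qed


lemma exists_K_multiple_in_R: "\<exists>l\<in>K. l \<noteq> 0 \<and> l * x \<in> R"
proof (cases "x \<in> M")
  case True then show ?thesis using K_one M_subset_R by (intro bexI[of _ 1]) auto
next
  case False
  then obtain l where l: "l \<in> K" "proj_K x * l = 1"
    using K_inverse proj_K(1) proj_K_eq_0_iff by blast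
  then have "proj_K (l * x) = 1" using proj_K_mult proj_K_K by (simp add: mult.commute)
  then show ?thesis using l mem_R_iff k_one by (intro bexI[of _ l]) auto
qed

lemma rescale_factors_into_R:
  assumes "x * y \<in> R"
  shows "\<exists>l l'. l \<in> K \<and> l' \<in> K \<and> l * l' = 1 \<and> l * x \<in> R \<and> l' * y \<in> R"
proof -
  have rescale: "\<exists>l l'. l \<in> K \<and> l' \<in> K \<and> l * l' = 1 \<and> l * x \<in> R \<and> l' * y \<in> R"
    if x: "x \<notin> M" and xy: "x * y \<in> R" for x y
  proof -
    obtain l where l: "l \<in> K" "proj_K x * l = 1"
      using K_inverse[OF proj_K(1)] proj_K_eq_0_iff x by blast
    have "proj_K (l * x) = 1" using proj_K_mult proj_K_K[OF l(1)] l(2) by (simp add: mult.commute)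
    then have "l * x \<in> R" using mem_R_iff k_one by simp
    have "proj_K (proj_K x * y) = proj_K (x * y)"
      using proj_K_mult proj_K_K[OF proj_K(1)] by simp
    then have "proj_K x * y \<in> R" using xy mem_R_iff by simp
    moreover have "l * proj_K x = 1" using l(2) by (simp add: mult.commute)
    ultimately show ?thesis using \<open>l * x \<in> R\<close> l(1) proj_K(1)[of x] by blast
  qed
  consider "x \<notin> M" | "y \<notin> M" | "x \<in> M" "y \<in> M" by blast
  then show ?thesis
  proof cases
    case 1
    then show ?thesis using rescale assms by blast
  next
    case 2
    have "y * x \<in> R" using assms by (simp add: mult.commute)
    then obtain l l' where "l \<in> K" "l' \<in> K" "l * l' = 1" "l * y \<in> R" "l' * x \<in> R"
      using rescale[OF 2] by blast
    then show ?thesis by (metis mult.commute)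
  next
    case 3
    then show ?thesis using K_one M_subset_R by (intro exI[of _ 1]) auto
  qed
qed

lemma irred_in_R_iff: "irred_in R q \<longleftrightarrow> q \<in> R \<and> irred_in UNIV q"
proof
  assume q: "irred_in R q"
  have "unit_in UNIV a \<or> unit_in UNIV b" if qab: "q = a * b" for a b
  proof -
    obtain l l' where l: "l \<in> K" "l' \<in> K" "l * l' = 1" "l * a \<in> R" "l' * b \<in> R"
      using rescale_factors_into_R[of a b] q qab unfolding irred_in_def by blast
    have "q = (l * a) * (l' * b)" using qab l(3) by (simp add: algebra_simps)
    then have "unit_in UNIV (l * a) \<or> unit_in UNIV (l' * b)"
      using q l(4,5) unit_in_R_iff unfolding irred_in_def by blast
    moreover have "unit_in UNIV l" "unit_in UNIV l'"
      using l(3) unfolding unit_in_UNIV_iff by (auto simp: mult.commute)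
    ultimately show ?thesis
      using unit_in_mult_cancel_left[OF mult_closed_UNIV] by blast
  qed
  then show "q \<in> R \<and> irred_in UNIV q" using q unit_in_R_iff unfolding irred_in_def by auto
next
  assume "q \<in> R \<and> irred_in UNIV q"
  then show "irred_in R q" unfolding irred_in_def using unit_in_R_iff by auto
qed

lemma assoc_in_R_imp_assoc_in_UNIV: "assoc_in R a b \<Longrightarrow> assoc_in UNIV a b"
  unfolding assoc_in_def using unit_in_R_iff by auto

lemma factorization_in_R_imp_UNIV:
  "m \<in> factorizations_in R x \<Longrightarrow> m \<in> factorizations_in UNIV x"
  unfolding factorizations_in_def using irred_in_R_iff assoc_in_R_imp_assoc_in_UNIV by auto

lemma irred_in_R_K_multiple:
  assumes "irred_in UNIV p" "c \<in> K" "c \<noteq> 0" "c * p \<in> R"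
  shows "irred_in R (c * p)"
  using irred_in_unit_mult[OF mult_closed_UNIV unit_in_K] assms irred_in_R_iff by blast


lemma fact_equiv_R_subset_UNIV: "fact_equiv R \<subseteq> fact_equiv UNIV"
  unfolding fact_equiv_def
  by (auto elim!: multiset.rel_mono_strong intro: assoc_in_R_imp_assoc_in_UNIV)

lemma prod_mset_mem_R: "(\<And>q. q \<in># m \<Longrightarrow> q \<in> R) \<Longrightarrow> prod_mset m \<in> R"
  by (induction m) (use one_R mult_closed_R in \<open>auto simp: mult_closed_def\<close>)

lemma assoc_in_UNIV_K_multiple: "c \<in> K \<Longrightarrow> c \<noteq> 0 \<Longrightarrow> assoc_in UNIV p (c * p)"
  using assoc_in_sym unit_in_K unfolding assoc_in_def by blast

text \<open>Given x = v q1 ... qn with R-irreducible qi and a unit v of T, either the residue of v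
  already lies in k, or some qi lies in M and can absorb the residue of v.\<close>
lemma R_factorization_absorbing_unit:
  assumes m: "\<forall>q\<in>#m. irred_in R q" and x: "x \<in> R" "x = v * prod_mset m"
    and v: "unit_in UNIV v"
  shows "\<exists>m'\<in>factorizations_in R x. (m, m') \<in> fact_equiv UNIV"
proof -
  have mR: "prod_mset m \<in> R" using m prod_mset_mem_R unfolding irred_in_def by blast
  have proj_x: "proj_K x = proj_K v * proj_K (prod_mset m)" using x(2) proj_K_mult by simp
  show ?thesis
  proof (cases "x \<in> M")
    case False
    then have "prod_mset m \<notin> M" using x(2) M_mult_left by auto
    then have "proj_K (prod_mset m) \<in> k" "proj_K (prod_mset m) \<noteq> 0"
      using mR mem_R_iff proj_K_eq_0_iff by auto
    then obtain e where e: "e \<in> k" "proj_K (prod_mset m) * e = 1" using k_inverse by blast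
    have "proj_K v = proj_K x * e" using proj_x e(2) by (simp add: mult.assoc)
    then have "unit_in R v" using unit_in_R_iff mem_R_iff k_mult e(1) x(1) v by simp
    then have "m \<in> factorizations_in R x"
      unfolding factorizations_in_def assoc_in_def using m x mR by blast
    moreover have "(m, m) \<in> fact_equiv UNIV"
      using fact_equiv_R_subset_UNIV fact_equiv_refl[OF one_R] calculation by blast
    ultimately show ?thesis by blast
  next
    case True
    define d where "d = proj_K v"
    have d: "d \<in> K" "d \<noteq> 0" unfolding d_def using proj_K(1) proj_K_unit_nonzero[OF v] by auto
    then obtain d' where d': "d' \<in> K" "d * d' = 1" using K_inverse by blast
    have "proj_K (prod_mset m) = 0"
      using True proj_x d(2) unfolding d_def proj_K_eq_0_iff[symmetric] by simp
    then obtain q where q: "q \<in># m" "q \<in> M"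
      using proj_K_eq_0_iff by (auto simp: proj_K_prod_mset prod_mset_zero_iff)
    define m' where "m' = add_mset (d * q) (m - {#q#})"
    have m_split: "m = add_mset q (m - {#q#})" using q(1) by simp
    have "irred_in R (d * q)"
      using irred_in_R_K_multiple[OF _ d] m q M_subset_R M_mult_left irred_in_R_iff by blast
    then have m'_irred: "\<forall>p\<in>#m'. irred_in R p"
      unfolding m'_def using m by (auto dest: in_diffD)
    have "prod_mset m' = d * prod_mset m"
      unfolding m'_def by (subst (2) m_split) (simp add: mult.assoc)
    moreover have "x = v * (d * d') * prod_mset m" using x(2) d'(2) by simp
    ultimately have "x = (v * d') * prod_mset m'" by (simp add: ac_simps)
    moreover have "unit_in R (v * d')"
      using unit_in_mult[OF mult_closed_UNIV v unit_in_K[OF d'(1)]] d'(2) mult_not_zero[of d d'] proj_K_mult proj_K_K[OF d'(1)]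
        unit_in_R_iff mem_R_iff k_one unfolding d_def by auto
    moreover have "prod_mset m' \<in> R"
      using m'_irred prod_mset_mem_R unfolding irred_in_def by blast
    ultimately have "m' \<in> factorizations_in R x"
      unfolding factorizations_in_def assoc_in_def using m'_irred x(1) by blast
    moreover have "rel_mset (assoc_in UNIV) m m'"
      unfolding m'_def by (subst m_split, rule rel_mset_Plus) (auto intro!: multiset.rel_refl_strong assoc_in_refl assoc_in_UNIV_K_multiple d)
    ultimately show ?thesis unfolding fact_equiv_def by blast
  qed
qed


lemma factorization_UNIV_to_R:
  assumes m: "m \<in> factorizations_in UNIV x" and l: "l \<in> K" "l \<noteq> 0" "l * x \<in> R"
  shows "\<exists>m'\<in>factorizations_in R (l * x). (m, m') \<in> fact_equiv UNIV"
proof -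
  obtain u where u: "unit_in UNIV u" "x = u * prod_mset m"
    using m unfolding factorizations_in_def assoc_in_def by blast
  define c where "c q = (SOME c. c \<in> K \<and> c \<noteq> 0 \<and> c * q \<in> R)" for q
  have c: "c q \<in> K \<and> c q \<noteq> 0 \<and> c q * q \<in> R" for q
    unfolding c_def by (rule someI_ex) (use exists_K_multiple_in_R in blast)
  define m1 where "m1 = image_mset (\<lambda>q. c q * q) m"
  have m1_irred: "\<forall>q\<in>#m1. irred_in R q"
    using m c irred_in_R_K_multiple unfolding m1_def factorizations_in_def by auto
  have m_m1: "rel_mset (assoc_in UNIV) m m1"
    unfolding m1_def by (rule rel_mset_image_mset) (use c assoc_in_UNIV_K_multiple in blast)
  then obtain w where w: "unit_in UNIV w" "prod_mset m = w * prod_mset m1"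
    using prod_mset_assoc_in[OF mult_closed_UNIV] by blast
  have "l * x = (l * u * w) * prod_mset m1" using u(2) w(2) by (simp add: ac_simps)
  moreover have "unit_in UNIV (l * u * w)"
    using unit_in_mult[OF mult_closed_UNIV] unit_in_K[OF l(1,2)] u(1) w(1) by blast
  ultimately obtain m' where "m' \<in> factorizations_in R (l * x)" "(m1, m') \<in> fact_equiv UNIV"
    using R_factorization_absorbing_unit[OF m1_irred l(3)] by blast
  moreover have "(m, m1) \<in> fact_equiv UNIV" using m_m1 unfolding fact_equiv_def by simp
  ultimately show ?thesis using fact_equiv_trans[OF mult_closed_UNIV] by (blast dest: transD)
qed

lemma U_FFD_UNIV_if_U_FFD_R:
  assumes "U_FFD R"
  shows "U_FFD (UNIV :: 'a set)"
  unfolding U_FFD_def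
proof (intro ballI impI)
  fix x :: 'a assume x: "x \<noteq> 0 \<and> is_atomic_elem UNIV x"
  obtain l where l: "l \<in> K" "l \<noteq> 0" "l * x \<in> R" using exists_K_multiple_in_R by blast
  note transfer = factorization_UNIV_to_R[OF _ l]
  have "is_atomic_elem R (l * x)"
  proof -
    consider "unit_in UNIV x" | m where "m \<noteq> {#}" "\<forall>p\<in>#m. irred_in UNIV p" "x = prod_mset m"
      using x unfolding is_atomic_elem_def by blast
    then show ?thesis
    proof cases
      case 1
      then have "unit_in R (l * x)"
        using unit_in_R_iff l unit_in_mult[OF mult_closed_UNIV unit_in_K] by blast
      then show ?thesis unfolding is_atomic_elem_def by blast
    next
      case 2
      then have "m \<in> factorizations_in UNIV x"
        unfolding factorizations_in_def by (simp add: assoc_in_refl)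
      then obtain m' where "m' \<in> factorizations_in R (l * x)" "(m, m') \<in> fact_equiv UNIV"
        using transfer by blast
      moreover have "m' \<noteq> {#}" using calculation(2) 2(1) unfolding fact_equiv_def by auto
      ultimately show ?thesis using is_atomic_elem_if_factorization[OF mult_closed_R] by blast
    qed
  qed
  then have "finite (factorizations_in R (l * x) // fact_equiv R)"
    using assms l x unfolding U_FFD_def by simp
  then obtain B where B: "finite B"
    "\<And>m. m \<in> factorizations_in R (l * x) \<Longrightarrow> \<exists>b\<in>B. (m, b) \<in> fact_equiv R"
    using finite_quotient_representatives fact_equiv_refl[OF one_R] by metis
  show "finite (factorizations_in UNIV x // fact_equiv UNIV)"
  proof (rule finite_quotient_if_finite_cover[OF B(1) fact_equiv_sym fact_equiv_trans[OF mult_closed_UNIV]])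
    fix m assume "m \<in> factorizations_in UNIV x"
    then obtain m' where "m' \<in> factorizations_in R (l * x)" "(m, m') \<in> fact_equiv UNIV"
      using transfer by blast
    moreover obtain b where "b \<in> B" "(m', b) \<in> fact_equiv R" using B(2) calculation(1) by blast
    ultimately show "\<exists>b\<in>B. (m, b) \<in> fact_equiv UNIV"
      using fact_equiv_R_subset_UNIV fact_equiv_trans[OF mult_closed_UNIV] by (blast dest: transD)
  qed
qed


definition k_coset :: "'a \<Rightarrow> 'a set" where
  "k_coset c = (\<lambda>y. c * y) ` (k - {0})"

lemma finite_unit_quotient_iff: "finite_unit_quotient K k \<longleftrightarrow> finite (k_coset ` (K - {0}))"
  unfolding finite_unit_quotient_def k_coset_def by (simp only: setcompr_eq_image Collect_mem_eq)

lemma k_coset_mult: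
  assumes e: "e \<in> k" "e \<noteq> 0"
  shows "k_coset (e * c) = k_coset c"
proof -
  obtain e' where e': "e' \<in> k" "e * e' = 1" using k_inverse e by blast
  show ?thesis unfolding k_coset_def
  proof (intro set_eqI iffI)
    fix z assume "z \<in> (\<lambda>y. e * c * y) ` (k - {0})"
    then obtain y where y: "y \<in> k - {0}" "z = e * c * y" by blast
    then have "z = c * (e * y)" "e * y \<in> k - {0}" using e k_mult by (auto simp: ac_simps)
    then show "z \<in> (\<lambda>y. c * y) ` (k - {0})" by blast
  next
    fix z assume "z \<in> (\<lambda>y. c * y) ` (k - {0})"
    then obtain y where y: "y \<in> k - {0}" "z = c * y" by blast
    have "e * c * (e' * y) = (e * e') * (c * y)" by (simp add: ac_simps)
    then have "z = e * c * (e' * y)" using y(2) e'(2) by simp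
    moreover have "e' * y \<in> k - {0}" using e' y(1) k_mult by auto
    ultimately show "z \<in> (\<lambda>y. e * c * y) ` (k - {0})" by blast
  qed
qed

lemma k_coset_eqD: "k_coset c = k_coset c' \<Longrightarrow> \<exists>e\<in>k. c = c' * e"
proof -
  assume "k_coset c = k_coset c'"
  moreover have "c \<in> k_coset c" unfolding k_coset_def using k_one by force
  ultimately show ?thesis unfolding k_coset_def by auto
qed


lemma k_coset_eq_if_assoc_in_R:
  assumes c: "c \<in> K" "c \<noteq> 0" and c': "c' \<in> K" "c' \<noteq> 0" and p: "p \<noteq> 0"
    and assoc: "assoc_in R (c * p) (c' * p)"
  shows "k_coset c = k_coset c'"
proof -
  obtain u where u: "unit_in R u" "c * p = u * (c' * p)" using assoc unfolding assoc_in_def by blast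
  then have "(c - u * c') * p = 0" by (simp add: algebra_simps)
  then have cu: "c = u * c'" using p by simp
  obtain i where i: "i \<in> K" "c' * i = 1" using K_inverse c' by blast
  have "u = c * i" using cu i(2) by (metis mult.assoc mult_1_right)
  then have "u \<in> k" using K_Int_R K_mult[OF c(1) i(1)] u(1) unfolding unit_in_def by blast
  moreover have "u \<noteq> 0" using cu c(2) by auto
  ultimately show ?thesis using k_coset_mult cu by simp
qed

text \<open>The factorizations (c p)(c^-1 p) of p^2, for c \<in> K - {0}, fall into finitely many classes,
  and the class of c p determines the coset c k^x.\<close>
lemma finite_unit_quotient_if_U_FFD_R:
  assumes U: "U_FFD R" and p: "p \<in> M" "irred_in UNIV p"
  shows "finite_unit_quotient K k"
proof -
  have p_nz: "p \<noteq> 0" using p(2) unfolding irred_in_def by blast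
  have irr: "irred_in R (c * p)" if "c \<in> K" "c \<noteq> 0" for c
    using irred_in_R_K_multiple[OF p(2) that] M_subset_R M_mult_left[OF p(1)] by blast
  have fact: "{#c * p, c' * p#} \<in> factorizations_in R (p * p)"
    if "c \<in> K" "c' \<in> K" "c * c' = 1" for c c'
  proof -
    have "c \<noteq> 0" "c' \<noteq> 0" using that(3) by auto
    then have "\<forall>q\<in>#{#c * p, c' * p#}. irred_in R q" using irr that(1,2) by auto
    moreover have "prod_mset {#c * p, c' * p#} = p * p" using that(3) by (simp add: algebra_simps)
    moreover have "p * p \<in> R" using M_subset_R M_mult_left[OF p(1)] by blast
    ultimately show ?thesis
      unfolding factorizations_in_def using assoc_in_refl[OF one_R] by (simp only: mem_Collect_eq)
  qed
  have "is_atomic_elem R (p * p)"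
    using is_atomic_elem_if_factorization[OF mult_closed_R fact[OF K_one K_one]] by simp
  moreover have "p * p \<in> R" "p * p \<noteq> 0" using M_subset_R M_mult_left[OF p(1)] p_nz by auto
  ultimately have "finite (factorizations_in R (p * p) // fact_equiv R)"
    using U unfolding U_FFD_def by blast
  then obtain B where B: "finite B"
    "\<And>m. m \<in> factorizations_in R (p * p) \<Longrightarrow> \<exists>b\<in>B. (m, b) \<in> fact_equiv R"
    using finite_quotient_representatives fact_equiv_refl[OF one_R] by metis
  have "finite (k_coset ` (K - {0}))"
  proof (rule finite_image_if_determined_by_finite)
    show "finite (\<Union>b\<in>B. set_mset b)" using B(1) by simp
    show "\<exists>s\<in>\<Union>b\<in>B. set_mset b. assoc_in R (c * p) s" if c: "c \<in> K - {0}" for c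
    proof -
      obtain c' where "c' \<in> K" "c * c' = 1" using K_inverse c by blast
      then obtain b where "b \<in> B" "(add_mset (c * p) {#c' * p#}, b) \<in> fact_equiv R"
        using B(2) fact c by blast
      then show ?thesis using rel_mset_related_member unfolding fact_equiv_def by fastforce
    qed
    show "k_coset c = k_coset c'"
      if "c \<in> K - {0}" "c' \<in> K - {0}" "assoc_in R (c * p) s" "assoc_in R (c' * p) s" for c c' s
      using that k_coset_eq_if_assoc_in_R[OF _ _ _ _ p_nz] assoc_in_sym
        assoc_in_trans[OF mult_closed_R] by blast
  qed
  then show ?thesis using finite_unit_quotient_iff by simp
qed


text \<open>The R-associate class of an element q = u p of R is determined by the coset of the
  residue of u; if p \<notin> M there is only one such coset.\<close>
lemma finite_R_classes_of_UNIV_associates: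
  assumes "p \<notin> M \<or> finite_unit_quotient K k"
  obtains Q where "finite Q" "\<And>q. q \<in> R \<Longrightarrow> assoc_in UNIV q p \<Longrightarrow> \<exists>q'\<in>Q. assoc_in R q q'"
proof -
  define A where "A = {q \<in> R. assoc_in UNIV q p}"
  define unit_of where "unit_of q = (SOME u. unit_in UNIV u \<and> q = u * p)" for q
  have unit_of: "unit_in UNIV (unit_of q) \<and> q = unit_of q * p" if "q \<in> A" for q
    unfolding unit_of_def by (rule someI_ex) (use that in \<open>auto simp: A_def assoc_in_def\<close>)
  define f where "f q = k_coset (proj_K (unit_of q))" for q
  have "finite (f ` A)"
  proof (cases "p \<in> M")
    case True
    then have "finite (k_coset ` (K - {0}))" using assms finite_unit_quotient_iff by blast
    moreover have "f ` A \<subseteq> k_coset ` (K - {0})"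
      unfolding f_def using unit_of proj_K(1) proj_K_unit_nonzero by blast
    ultimately show ?thesis by (rule finite_subset[rotated])
  next
    case False
    then obtain i where i: "i \<in> K" "proj_K p * i = 1"
      using K_inverse[OF proj_K(1)] proj_K_eq_0_iff by blast
    have "f q = k_coset i" if q: "q \<in> A" for q
    proof -
      have proj_q: "proj_K q = proj_K (unit_of q) * proj_K p"
        using unit_of[OF q] proj_K_mult by metis
      have "proj_K q \<in> k" using q mem_R_iff unfolding A_def by blast
      moreover have "proj_K q \<noteq> 0"
        using proj_q proj_K_unit_nonzero unit_of[OF q] i(2) by auto
      moreover have "proj_K (unit_of q) = proj_K q * i"
        using proj_q i(2) by (simp add: mult.assoc)
      ultimately show ?thesis unfolding f_def using k_coset_mult by simp
    qed
    then have "f ` A \<subseteq> {k_coset i}" by blast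
    then show ?thesis using finite_subset by blast
  qed
  moreover have "(q, q') \<in> {(a, b). assoc_in R a b}"
    if q: "q \<in> A" and q': "q' \<in> A" and f_eq: "f q = f q'" for q q'
  proof -
    define u u' where "u = unit_of q" and "u' = unit_of q'"
    have u: "unit_in UNIV u" "q = u * p" and u': "unit_in UNIV u'" "q' = u' * p"
      using unit_of q q' unfolding u_def u'_def by auto
    obtain e where e: "e \<in> k" "proj_K u = proj_K u' * e"
      using k_coset_eqD f_eq unfolding f_def u_def u'_def by blast
    obtain v' where v': "unit_in UNIV v'" "u' * v' = 1" using u'(1) by (rule unit_in_inverse)
    have "q = (u * v') * q'" using u(2) u'(2) v'(2) by (simp add: ac_simps)
    moreover have "proj_K (u * v') = e"
      using e(2) v'(2) proj_K_mult proj_K_one by (metis mult.commute mult.left_commute mult_1_right)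
    then have "unit_in R (u * v')"
      using unit_in_R_iff mem_R_iff e(1) unit_in_mult[OF mult_closed_UNIV u(1) v'(1)] by simp
    ultimately show ?thesis using q q' unfolding A_def assoc_in_def by blast
  qed
  ultimately obtain Q where "finite Q" "\<And>q. q \<in> A \<Longrightarrow> \<exists>q'\<in>Q. (q, q') \<in> {(a, b). assoc_in R a b}"
    by (rule finite_cover_if_finite_image) blast+
  then show ?thesis using that unfolding A_def by blast
qed


lemma is_atomic_elem_R_imp_UNIV: "is_atomic_elem R x \<Longrightarrow> is_atomic_elem UNIV x"
  unfolding is_atomic_elem_def using unit_in_R_iff irred_in_R_iff by auto

lemma U_FFD_R_if_U_FFD_UNIV:
  assumes U: "U_FFD (UNIV :: 'a set)"
    and cond: "finite_unit_quotient K k \<or> \<not> (\<exists>p\<in>M. irred_in UNIV p)"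
  shows "U_FFD R"
  unfolding U_FFD_def
proof (intro ballI impI)
  fix x assume xR: "x \<in> R" and x: "x \<noteq> 0 \<and> is_atomic_elem R x"
  then have "finite (factorizations_in UNIV x // fact_equiv UNIV)"
    using U is_atomic_elem_R_imp_UNIV unfolding U_FFD_def by blast
  then obtain B where B: "B \<subseteq> factorizations_in UNIV x" "finite B"
    "\<And>m. m \<in> factorizations_in UNIV x \<Longrightarrow> \<exists>b\<in>B. (m, b) \<in> fact_equiv UNIV"
    by (rule finite_quotient_representatives) (auto intro: fact_equiv_refl)
  define P where "P = (\<Union>b\<in>B. set_mset b)"
  have "\<forall>p\<in>P. \<exists>Q. finite Q \<and> (\<forall>q. q \<in> R \<and> assoc_in UNIV q p \<longrightarrow> (\<exists>q'\<in>Q. assoc_in R q q'))"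
  proof
    fix p assume "p \<in> P"
    then have "irred_in UNIV p" using B(1) unfolding P_def factorizations_in_def by blast
    then have "p \<notin> M \<or> finite_unit_quotient K k" using cond by blast
    then obtain Q where "finite Q" "\<And>q. q \<in> R \<Longrightarrow> assoc_in UNIV q p \<Longrightarrow> \<exists>q'\<in>Q. assoc_in R q q'"
      by (rule finite_R_classes_of_UNIV_associates) blast+
    then show "\<exists>Q. finite Q \<and> (\<forall>q. q \<in> R \<and> assoc_in UNIV q p \<longrightarrow> (\<exists>q'\<in>Q. assoc_in R q q'))"
      by blast
  qed
  then obtain Q where Q: "\<forall>p\<in>P. finite (Q p) \<and>
      (\<forall>q. q \<in> R \<and> assoc_in UNIV q p \<longrightarrow> (\<exists>q'\<in>Q p. assoc_in R q q'))"
    by (rule bchoice_iff[THEN iffD1, THEN exE])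
  define C where "C = (\<Union>b\<in>B. multisets_of_size (\<Union>p\<in>P. Q p) (size b))"
  have "finite C" unfolding C_def using B(2) Q unfolding P_def by auto
  then show "finite (factorizations_in R x // fact_equiv R)"
  proof (rule finite_quotient_if_finite_cover[OF _ fact_equiv_sym fact_equiv_trans[OF mult_closed_R]])
    fix m assume m: "m \<in> factorizations_in R x"
    then obtain b where "b \<in> B" "(m, b) \<in> fact_equiv UNIV"
      using B(3)[OF factorization_in_R_imp_UNIV] by blast
    then have b: "b \<in> B" "rel_mset (assoc_in UNIV) m b" unfolding fact_equiv_def by simp_all
    have "\<exists>q'. q' \<in> (\<Union>p\<in>P. Q p) \<and> assoc_in R q q'" if q: "q \<in># m" for q
    proof -
      obtain p where p: "p \<in># b" "assoc_in UNIV q p" using rel_mset_related_member[OF b(2) q] by blast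
      have "p \<in> P" using p(1) b(1) unfolding P_def by blast
      moreover have "q \<in> R" using m q unfolding factorizations_in_def irred_in_def by blast
      moreover have "\<forall>q. q \<in> R \<and> assoc_in UNIV q p \<longrightarrow> (\<exists>q'\<in>Q p. assoc_in R q q')"
        using Q calculation(1) by blast
      ultimately obtain q' where "q' \<in> Q p" "assoc_in R q q'" using p(2) by blast
      then show ?thesis using \<open>p \<in> P\<close> by blast
    qed
    define g where "g q = (SOME q'. q' \<in> (\<Union>p\<in>P. Q p) \<and> assoc_in R q q')" for q
    have g: "g q \<in> (\<Union>p\<in>P. Q p) \<and> assoc_in R q (g q)" if "q \<in># m" for q
      unfolding g_def by (rule someI_ex) (rule \<open>q \<in># m \<Longrightarrow> _\<close>[OF that])
    have "rel_mset (assoc_in R) m (image_mset g m)" by (rule rel_mset_image_mset) (use g in blast)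
    moreover have "set_mset (image_mset g m) \<subseteq> (\<Union>p\<in>P. Q p)" using g by auto
    moreover have "size (image_mset g m) = size b" using rel_mset_size[OF b(2)] by simp
    ultimately have "image_mset g m \<in> C" "(m, image_mset g m) \<in> fact_equiv R"
      unfolding C_def multisets_of_size_def fact_equiv_def using b(1) by blast+
    then show "\<exists>c\<in>C. (m, c) \<in> fact_equiv R" by blast
  qed
qed

end

theorem mainTheorem5:
  fixes K M k :: "'a::idom set"
  assumes K: "is_subfield K"
    and M: "is_maximal_ideal M" and Mnz: "M \<noteq> {0}"
    and TKM: "(UNIV :: 'a set) = {a + b | a b. a \<in> K \<and> b \<in> M}"
    and k: "is_subfield k" and kK: "k \<subseteq> K"
  defines "R \<equiv> {a + b | a b. a \<in> k \<and> b \<in> M}"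
  shows "((\<exists>p\<in>M. irred_in UNIV p) \<longrightarrow>
            (U_FFD R \<longleftrightarrow> U_FFD (UNIV :: 'a set) \<and> finite_unit_quotient K k))
       \<and> ((\<not> (\<exists>p\<in>M. irred_in UNIV p)) \<longrightarrow>
            (U_FFD R \<longleftrightarrow> U_FFD (UNIV :: 'a set)))"
proof -
  interpret D_plus_M K M k R
    using K M TKM k kK unfolding D_plus_M_def R_def is_maximal_ideal_def by blast
  show ?thesis
    using U_FFD_UNIV_if_U_FFD_R finite_unit_quotient_if_U_FFD_R U_FFD_R_if_U_FFD_UNIV by blast
qed

end
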